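(* Fix $n\ge2$. Under the coupling described in the context, for any $t\ge0$, $\delta>0$ and $\mathbf{y}\in\mathbb{R}_+^{n-1}$, $$\lim_{\tilde{\mathbf{y}}\to\mathbf{y}}\mathbb{P}_{\mathbf{y},\tilde{\mathbf{y}}}\Big(\sum_{i=1}^{n-1}|Y_i(t)-\tilde Y_i(t)|\ge\delta\Big)=0.$$ In particular, the gap process has the weak Feller property: for every bounded continuous $f$ and $t\ge0$, $\mathbf{y}\mapsto\mathbb{E}_{\mathbf{y}}f(\mathbf{Y}(t))$ is bounded and continuous.
   Context: Fix $n\ge 2$ and a probability law $\theta$ on $(0,\infty)$ with mean $1$. The $n$-particle Stochastic Follow-the-Leader system $\mathbf{X}=(X_1,\dots,X_n)$ on $\mathbb{R}$ evolves as a pure jump Markov process: the leader $X_1$ jumps forward at rate $1$ with i.i.d. jump sizes of law $\theta$; for $i\ge2$, $X_i$ jumps at rate $X_{i-1}-X_i$ to a uniform location in $(X_i,X_{i-1})$. Gaps: $Y_i=X_i-X_{i+1}$. Coupling: two systems $\mathbf{X},\tilde{\mathbf{X}}$ with $X_1(0)=\tilde X_1(0)$; the leaders use the same jump times and sizes (so $X_1\equiv\tilde X_1$). For each $i\in[n-1]$, at time $t$ let $m_i=Y_i\wedge\tilde Y_i$, $n_i=|Y_i-\tilde Y_i|$, and call the $(i+1)$-th particle with larger gap ahead the "faster" one. At rate $m_i+n_i$ (independently over $i$) an event occurs for the pair $(X_{i+1},\tilde X_{i+1})$: with probability $n_i/(m_i+n_i)$ the faster particle jumps forward by a $\mathrm{U}(0,n_i)$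 amount and the slower does not move; with probability $m_i/(m_i+n_i)$ the faster particle jumps forward by $U^*\sim\mathrm{U}(n_i,m_i+n_i)$ and the slower simultaneously jumps forward by $U^*-n_i$. Each marginal is a copy of the original system. $\mathbb{P}_{\mathbf{y},\tilde{\mathbf{y}}}$ denotes the law of the coupled gap processes $(\mathbf{Y},\tilde{\mathbf{Y}})$ with $\mathbf{Y}(0)=\mathbf{y}$, $\tilde{\mathbf{Y}}(0)=\tilde{\mathbf{y}}$. *)

theory Defs
  imports "HOL-Probability.Probability"
begin

text \<open>Gap vectors of the n-particle system are functions nat => real supported on
  indices 1..n-1 (gap i = X_i - X_{i+1}). The state space R_+^{n-1}:\<close>

definition gap_space :: "nat \<Rightarrow> (nat \<Rightarrow> real) set" where
  "gap_space n = {y. (\<forall>i\<in>{1..n-1}. 0 \<le> y i) \<and> (\<forall>i. i \<notin> {1..n-1} \<longrightarrow> y i = 0)}"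

text \<open>Underlying probability space: an i.i.d. sequence of triples (E_k, U_k, J_k)
  with E_k ~ Exp(1), U_k ~ U(0,1), J_k ~ theta, all independent.\<close>

definition step_law :: "real measure \<Rightarrow> (real \<times> real \<times> real) measure" where
  "step_law \<theta> = density lborel (\<lambda>x. ennreal (exponential_density 1 x))
      \<Otimes>\<^sub>M (uniform_measure lborel {0..1} \<Otimes>\<^sub>M \<theta>)"

definition SFL_space :: "real measure \<Rightarrow> (nat \<Rightarrow> real \<times> real \<times> real) measure" where
  "SFL_space \<theta> = PiM UNIV (\<lambda>_. step_law \<theta>)"

text \<open>Move the (i+1)-th particle forward by d: gap i shrinks, gap i+1 grows.\<close>

definition gap_move :: "nat \<Rightarrow> nat \<Rightarrow> real \<Rightarrow> (nat \<Rightarrow> real) \<Rightarrow> (nat \<Rightarrow> real)" where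
  "gap_move n i d y = (y(i := y i - d))(Suc i := (if Suc i < n then y (Suc i) + d else y (Suc i)))"

definition srate :: "nat \<Rightarrow> (nat \<Rightarrow> real) \<Rightarrow> real" where
  "srate n y = 1 + (\<Sum>j=1..n-1. y j)"

definition sstep :: "nat \<Rightarrow> (nat \<Rightarrow> real) \<Rightarrow> real \<Rightarrow> real \<Rightarrow> (nat \<Rightarrow> real)" where
  "sstep n y u J =
    (let v = u * srate n y in
     if v < 1 then y(1 := y 1 + J)
     else if (\<exists>i\<in>{1..n-1}. v < 1 + (\<Sum>j=1..i. y j)) then
       (let i = (LEAST i. i \<in> {1..n-1} \<and> v < 1 + (\<Sum>j=1..i. y j));
            w = v - (1 + (\<Sum>j\<in>{1..<i}. y j))
        in gap_move n i w y)
     else y)"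

primrec sstate :: "nat \<Rightarrow> (nat \<Rightarrow> real) \<Rightarrow> (nat \<Rightarrow> real \<times> real \<times> real) \<Rightarrow> nat \<Rightarrow> (nat \<Rightarrow> real)" where
  "sstate n y0 \<omega> 0 = y0"
| "sstate n y0 \<omega> (Suc k) = sstep n (sstate n y0 \<omega> k) (fst (snd (\<omega> k))) (snd (snd (\<omega> k)))"

primrec stime :: "nat \<Rightarrow> (nat \<Rightarrow> real) \<Rightarrow> (nat \<Rightarrow> real \<times> real \<times> real) \<Rightarrow> nat \<Rightarrow> real" where
  "stime n y0 \<omega> 0 = 0"
| "stime n y0 \<omega> (Suc k) = stime n y0 \<omega> k + fst (\<omega> k) / srate n (sstate n y0 \<omega> k)"

text \<open>Gap vector Y(t) started from y0 (convention on the null explosion event: y0).\<close>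
definition sgaps_at :: "nat \<Rightarrow> (nat \<Rightarrow> real) \<Rightarrow> (nat \<Rightarrow> real \<times> real \<times> real) \<Rightarrow> real \<Rightarrow> (nat \<Rightarrow> real)" where
  "sgaps_at n y0 \<omega> t =
     (if \<exists>k. t < stime n y0 \<omega> (Suc k) then sstate n y0 \<omega> (LEAST k. t < stime n y0 \<omega> (Suc k)) else y0)"

type_synonym cstate = "(nat \<Rightarrow> real) \<times> (nat \<Rightarrow> real)"

text \<open>Total rate: leader rate 1 plus, for each pair i, m_i + n_i = max(Y_i, Y~_i).\<close>
definition crate :: "nat \<Rightarrow> cstate \<Rightarrow> real" where
  "crate n s = 1 + (\<Sum>j=1..n-1. max (fst s j) (snd s j))"

text \<open>Given the pair event for gap i and W ~ U(0, m_i+n_i): the faster particle jumps W,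
  the slower jumps max 0 (W - n_i); this realises both branches of the coupling.\<close>
definition cstep :: "nat \<Rightarrow> cstate \<Rightarrow> real \<Rightarrow> real \<Rightarrow> cstate" where
  "cstep n s u J =
    (let y = fst s; z = snd s; M = (\<lambda>j. max (y j) (z j)); v = u * crate n s in
     if v < 1 then (y(1 := y 1 + J), z(1 := z 1 + J))
     else if (\<exists>i\<in>{1..n-1}. v < 1 + (\<Sum>j=1..i. M j)) then
       (let i = (LEAST i. i \<in> {1..n-1} \<and> v < 1 + (\<Sum>j=1..i. M j));
            w = v - (1 + (\<Sum>j\<in>{1..<i}. M j));
            d = \<bar>y i - z i\<bar>;
            dy = (if z i \<le> y i then w else max 0 (w - d));
            dz = (if y i \<le> z i then w else max 0 (w - d))
        in (gap_move n i dy y, gap_move n i dz z))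
     else s)"

primrec cstate :: "nat \<Rightarrow> cstate \<Rightarrow> (nat \<Rightarrow> real \<times> real \<times> real) \<Rightarrow> nat \<Rightarrow> cstate" where
  "cstate n s0 \<omega> 0 = s0"
| "cstate n s0 \<omega> (Suc k) = cstep n (cstate n s0 \<omega> k) (fst (snd (\<omega> k))) (snd (snd (\<omega> k)))"

primrec ctime :: "nat \<Rightarrow> cstate \<Rightarrow> (nat \<Rightarrow> real \<times> real \<times> real) \<Rightarrow> nat \<Rightarrow> real" where
  "ctime n s0 \<omega> 0 = 0"
| "ctime n s0 \<omega> (Suc k) = ctime n s0 \<omega> k + fst (\<omega> k) / crate n (cstate n s0 \<omega> k)"

definition cgaps_at :: "nat \<Rightarrow> cstate \<Rightarrow> (nat \<Rightarrow> real \<times> real \<times> real) \<Rightarrow> real \<Rightarrow> cstate" where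
  "cgaps_at n s0 \<omega> t =
     (if \<exists>k. t < ctime n s0 \<omega> (Suc k) then cstate n s0 \<omega> (LEAST k. t < ctime n s0 \<omega> (Suc k)) else s0)"

definition coupled_prob :: "real measure \<Rightarrow> nat \<Rightarrow> (nat \<Rightarrow> real) \<Rightarrow> (nat \<Rightarrow> real) \<Rightarrow> real
    \<Rightarrow> (cstate \<Rightarrow> bool) \<Rightarrow> real" where
  "coupled_prob \<theta> n y y' t P =
     measure (SFL_space \<theta>) {\<omega> \<in> space (SFL_space \<theta>). P (cgaps_at n (y, y') \<omega> t)}"

definition gap_expect :: "real measure \<Rightarrow> nat \<Rightarrow> (nat \<Rightarrow> real) \<Rightarrow> real \<Rightarrow> ((nat \<Rightarrow> real) \<Rightarrow> real) \<Rightarrow> real" where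
  "gap_expect \<theta> n y t f = integral\<^sup>L (SFL_space \<theta>) (\<lambda>\<omega>. f (sgaps_at n y \<omega> t))"

end

theory Submission
  imports Defs
begin

text \<open>
  Under the coupling, a pair event for gap i moves the two (i+1)-th particles by dy and dz with
  |(Y_i - dy) - (Y~_i - dz)| + |dy - dz| <= |Y_i - Y~_i|, and gap i+1 changes by the same
  amounts; so the l1-distance of the coupled gap vectors never increases, and started closer
  than \<delta> it never reaches \<delta>.

  For the Feller property the gap process is built from i.i.d. noise (E_k, U_k, J_k) by the
  Gillespie construction. For almost every noise sequence the state at time t is continuous in
  the initial state: the selectors U_k miss the endpoints of the event intervals and t is not a
  jump time (each time a fresh atomless variable would have to hit a value determined by the
  past), and there is no explosion before t. For the latter, over the jumps 2^m, ..., 2^(m+1) - 1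
  the holding variables sum to at least 2^m / 2 except with probability (sqrt e / 2)^(2^m)
  (Chernoff), and the leader has jumped at most 2 K 2^m by then except with probability 1/K
  (Markov, using mean 1). The total rate grows only by leader jumps, so each such block lasts
  at least 1 / (2 + 4 K), and infinitely many blocks are of this kind. Dominated convergence
  then gives continuity of y \<mapsto> E_y f(Y(t)).
\<close>

section \<open>Contraction of the coupling\<close>

definition gap_l1_dist :: "nat \<Rightarrow> cstate \<Rightarrow> real" where
  "gap_l1_dist n s = (\<Sum>i=1..n-1. \<bar>fst s i - snd s i\<bar>)"

lemma coupled_jump_contracts:
  fixes a b w :: real
  assumes "0 \<le> w"
    and "dy = (if b \<le> a then w else max 0 (w - \<bar>a - b\<bar>))"
    and "dz = (if a \<le> b then w else max 0 (w - \<bar>a - b\<bar>))"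
  shows "\<bar>(a - dy) - (b - dz)\<bar> + \<bar>dy - dz\<bar> \<le> \<bar>a - b\<bar>"
  using assms by (auto simp: abs_if max_def split: if_splits)

lemma gap_move_apply:
  "gap_move n i d x j =
    (if j = Suc i then (if Suc i < n then x (Suc i) + d else x (Suc i)) else if j = i then x i - d else x j)"
  unfolding gap_move_def by simp

lemma gap_l1_dist_gap_move_le:
  assumes i: "i \<in> {1..n-1}"
    and contr: "\<bar>(y i - dy) - (z i - dz)\<bar> + \<bar>dy - dz\<bar> \<le> \<bar>y i - z i\<bar>"
  shows "gap_l1_dist n (gap_move n i dy y, gap_move n i dz z) \<le> gap_l1_dist n (y, z)"
proof -
  let ?c = "\<bar>dy - dz\<bar>"
  let ?G = "\<lambda>j. \<bar>y j - z j\<bar>"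
  let ?H = "\<lambda>j. ?G j + (if j = Suc i then ?c else 0) - (if j = i then ?c else 0)"
  have "\<bar>gap_move n i dy y j - gap_move n i dz z j\<bar> \<le> ?H j" if "j \<in> {1..n-1}" for j
    using contr that i by (auto simp: gap_move_apply abs_if split: if_splits)
  then have "gap_l1_dist n (gap_move n i dy y, gap_move n i dz z) \<le> sum ?H {1..n-1}"
    unfolding gap_l1_dist_def by (intro sum_mono) auto
  also have "sum ?H {1..n-1} = sum ?G {1..n-1} + (\<Sum>j\<in>{1..n-1}. if j = Suc i then ?c else 0) - ?c"
    using i by (simp add: sum_subtractf sum.distrib)
  also have "(\<Sum>j\<in>{1..n-1}. if j = Suc i then ?c else 0) \<le> ?c"
    by (simp add: sum.delta)
  finally show ?thesis by (simp add: gap_l1_dist_def)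
qed

lemma least_selected_index:
  fixes M :: "nat \<Rightarrow> real"
  assumes ex: "\<exists>i\<in>{1..n-1}. v < 1 + (\<Sum>j=1..i. M j)" and v1: "\<not> v < 1"
  defines "i \<equiv> LEAST i. i \<in> {1..n-1} \<and> v < 1 + (\<Sum>j=1..i. M j)"
  shows "i \<in> {1..n-1}" and "0 \<le> v - (1 + (\<Sum>j\<in>{1..<i}. M j))"
    and "v - (1 + (\<Sum>j\<in>{1..<i}. M j)) < M i"
proof -
  have i: "i \<in> {1..n-1} \<and> v < 1 + (\<Sum>j=1..i. M j)"
    unfolding i_def using ex by (metis (mono_tags, lifting) LeastI)
  then show "i \<in> {1..n-1}" by blast
  have "(\<Sum>j=1..i. M j) = (\<Sum>j\<in>{1..<i}. M j) + M i"
    using i sum.atLeastLessThan_Suc[of 1 i M] by (simp add: atLeastLessThanSuc_atLeastAtMost)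
  with i show "v - (1 + (\<Sum>j\<in>{1..<i}. M j)) < M i" by simp
  show "0 \<le> v - (1 + (\<Sum>j\<in>{1..<i}. M j))"
  proof (cases "i = 1")
    case True
    with v1 show ?thesis by simp
  next
    case False
    with i have "i - 1 \<in> {1..n-1}" "i - 1 < i" by auto
    then have "\<not> v < 1 + (\<Sum>j=1..i-1. M j)"
      unfolding i_def using not_less_Least by blast
    moreover have "{1..<i} = {1..i-1}" using False i by auto
    ultimately show ?thesis by simp
  qed
qed

lemma gap_l1_dist_cstep_le: "gap_l1_dist n (cstep n s u J) \<le> gap_l1_dist n s"
proof -
  obtain y z where s: "s = (y, z)" by (cases s)
  define M where "M = (\<lambda>j. max (y j) (z j))"
  define v where "v = u * crate n s"
  consider (leader) "v < 1" | (none) "\<not> v < 1" "\<not> (\<exists>i\<in>{1..n-1}. v < 1 + (\<Sum>j=1..i. M j))"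
    | (pair) "\<not> v < 1" "\<exists>i\<in>{1..n-1}. v < 1 + (\<Sum>j=1..i. M j)"
    by blast
  then show ?thesis
  proof cases
    case leader
    then have "cstep n s u J = (y(1 := y 1 + J), z(1 := z 1 + J))"
      by (simp add: cstep_def s v_def Let_def)
    moreover have "gap_l1_dist n (y(1 := y 1 + J), z(1 := z 1 + J)) = gap_l1_dist n (y, z)"
      unfolding gap_l1_dist_def by (rule sum.cong) auto
    ultimately show ?thesis using s by simp
  next
    case none
    then have "cstep n s u J = s" by (simp add: cstep_def s v_def Let_def M_def)
    then show ?thesis by simp
  next
    case pair
    define i where "i = (LEAST i. i \<in> {1..n-1} \<and> v < 1 + (\<Sum>j=1..i. M j))"
    define w where "w = v - (1 + (\<Sum>j\<in>{1..<i}. M j))"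
    define dy where "dy = (if z i \<le> y i then w else max 0 (w - \<bar>y i - z i\<bar>))"
    define dz where "dz = (if y i \<le> z i then w else max 0 (w - \<bar>y i - z i\<bar>))"
    have i: "i \<in> {1..n-1}" and w: "0 \<le> w"
      using least_selected_index[OF pair(2,1)] unfolding i_def w_def by auto
    have "cstep n s u J = (gap_move n i dy y, gap_move n i dz z)"
      using pair by (simp add: cstep_def s v_def Let_def M_def i_def w_def dy_def dz_def)
    moreover have "gap_l1_dist n (gap_move n i dy y, gap_move n i dz z) \<le> gap_l1_dist n (y, z)"
      using i coupled_jump_contracts[OF w dy_def dz_def] by (rule gap_l1_dist_gap_move_le)
    ultimately show ?thesis using s by simp
  qed
qed

lemma gap_l1_dist_cstate_le: "gap_l1_dist n (cstate n s \<omega> k) \<le> gap_l1_dist n s"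
  by (induction k) (auto intro: order_trans[OF gap_l1_dist_cstep_le])

lemma gap_l1_dist_cgaps_at_le: "gap_l1_dist n (cgaps_at n s \<omega> t) \<le> gap_l1_dist n s"
  unfolding cgaps_at_def using gap_l1_dist_cstate_le by auto

lemma tendsto_coordinate:
  fixes f :: "'a \<Rightarrow> 'b \<Rightarrow> 'c::topological_space"
  assumes "(f \<longlongrightarrow> l) F"
  shows "((\<lambda>x. f x i) \<longlongrightarrow> l i) F"
  using continuous_on_tendsto_compose[OF continuous_on_product_coordinates assms] by simp

lemma coupled_prob_tendsto_0:
  assumes "0 < \<delta>"
  shows "((\<lambda>y'. coupled_prob \<theta> n y y' t (\<lambda>s. \<delta> \<le> gap_l1_dist n s)) \<longlongrightarrow> 0) (at y within S)"
proof -
  have "((\<lambda>y'. y' i) \<longlongrightarrow> y i) (at y within S)" for i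
    by (rule tendsto_coordinate[OF tendsto_ident_at])
  then have "((\<lambda>y'. \<Sum>i=1..n-1. \<bar>y i - y' i\<bar>) \<longlongrightarrow> (\<Sum>i=1..n-1. \<bar>y i - y i\<bar>)) (at y within S)"
    by (intro tendsto_intros)
  then have "\<forall>\<^sub>F y' in at y within S. gap_l1_dist n (y, y') < \<delta>"
    using assms unfolding gap_l1_dist_def by (auto intro: order_tendstoD)
  then show ?thesis
  proof (rule tendsto_eventually[OF eventually_mono])
    fix y' assume "gap_l1_dist n (y, y') < \<delta>"
    then have "{\<omega> \<in> space (SFL_space \<theta>). \<delta> \<le> gap_l1_dist n (cgaps_at n (y, y') \<omega> t)} = {}"
      using gap_l1_dist_cgaps_at_le[of n "(y, y')"] by (auto simp: not_le intro: le_less_trans)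
    then show "coupled_prob \<theta> n y y' t (\<lambda>s. \<delta> \<le> gap_l1_dist n s) = 0"
      unfolding coupled_prob_def by (simp only: measure_empty)
  qed
qed


section \<open>Continuity of the gap process in its initial state\<close>

lemma tendsto_coordinatewise_then_product:
  fixes f :: "'a \<Rightarrow> 'b \<Rightarrow> 'c::topological_space"
  assumes "\<And>i. ((\<lambda>x. f x i) \<longlongrightarrow> l i) F"
  shows "(f \<longlongrightarrow> l) F"
proof -
  have "limitin (product_topology (\<lambda>_. euclidean) UNIV) f l F"
    unfolding limitin_componentwise using assms by (simp add: limitin_canonical_iff)
  then show ?thesis by (simp add: euclidean_product_topology limitin_canonical_iff)
qed

lemma tendsto_gap_move:
  assumes "(d \<longlongrightarrow> d0) F" and "(Y \<longlongrightarrow> y0) F"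
  shows "((\<lambda>c. gap_move n i (d c) (Y c)) \<longlongrightarrow> gap_move n i d0 y0) F"
  unfolding gap_move_def using assms(1) tendsto_coordinate[OF assms(2)]
  by (intro tendsto_coordinatewise_then_product) (auto intro!: tendsto_intros)

lemma tendsto_fun_upd_add:
  fixes Y :: "'a \<Rightarrow> nat \<Rightarrow> real"
  assumes "(Y \<longlongrightarrow> y0) F"
  shows "((\<lambda>c. (Y c)(i := Y c i + a)) \<longlongrightarrow> y0(i := y0 i + a)) F"
  using tendsto_coordinate[OF assms]
  by (intro tendsto_coordinatewise_then_product) (auto intro!: tendsto_intros)

lemma tendsto_srate:
  assumes "(Y \<longlongrightarrow> y0) F"
  shows "((\<lambda>c. srate n (Y c)) \<longlongrightarrow> srate n y0) F"
  unfolding srate_def by (intro tendsto_intros tendsto_coordinate[OF assms])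

lemma eventually_less_iff_limits:
  fixes a b :: "'a \<Rightarrow> real"
  assumes "(a \<longlongrightarrow> a0) F" and "(b \<longlongrightarrow> b0) F" and "a0 \<noteq> b0"
  shows "\<forall>\<^sub>F x in F. (a x < b x) = (a0 < b0)"
proof -
  have lim: "((\<lambda>x. a x - b x) \<longlongrightarrow> a0 - b0) F"
    using assms by (intro tendsto_intros)
  show ?thesis
  proof (cases "a0 < b0")
    case True
    then have "\<forall>\<^sub>F x in F. a x - b x < 0" using lim by (intro order_tendstoD) auto
    then show ?thesis by eventually_elim (use True in auto)
  next
    case False
    then have "\<forall>\<^sub>F x in F. a x - b x > 0" using lim assms(3) by (intro order_tendstoD) auto
    then show ?thesis by eventually_elim (use False in auto)
  qed
qed

text \<open>The scaled selector \<open>u * srate n x\<close> avoids every endpoint \<open>1 + x 1 + \<dots> + x i\<close> of the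
  intervals choosing the next event (\<open>i = 0\<close> separates the leader from the first gap), so
  near \<open>x\<close> the same branch of \<^const>\<open>sstep\<close> is taken.\<close>

definition off_boundary :: "nat \<Rightarrow> (nat \<Rightarrow> real) \<Rightarrow> real \<Rightarrow> bool" where
  "off_boundary n x u \<longleftrightarrow> (\<forall>i. u * srate n x \<noteq> 1 + (\<Sum>j=1..i. x j))"

lemma isCont_sstep:
  assumes "off_boundary n x u"
  shows "isCont (\<lambda>y. sstep n y u J) x"
proof -
  define V where "V = (\<lambda>y. u * srate n y)"
  define T where "T = (\<lambda>i (y::nat\<Rightarrow>real). 1 + (\<Sum>j=1..i. y j))"
  define S where "S = {1..n-1}"
  have id: "((\<lambda>y. y) \<longlongrightarrow> x) (at x)" by (rule tendsto_ident_at)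
  have V: "(V \<longlongrightarrow> V x) (at x)" unfolding V_def by (intro tendsto_intros tendsto_srate id)
  have T: "(T i \<longlongrightarrow> T i x) (at x)" for i
    unfolding T_def by (intro tendsto_intros tendsto_coordinate[OF id])
  have V_T: "V x \<noteq> T i x" for i
    using assms unfolding off_boundary_def V_def T_def by blast
  have ev1: "\<forall>\<^sub>F y in at x. (V y < 1) = (V x < 1)"
    using eventually_less_iff_limits[OF V T[of 0] V_T[of 0]] by (simp add: T_def)
  have ev2: "\<forall>\<^sub>F y in at x. \<forall>i\<in>S. (V y < T i y) = (V x < T i x)"
    unfolding S_def by (intro eventually_ball_finite ballI eventually_less_iff_limits V T V_T) simp
  define i0 where "i0 = (LEAST i. i \<in> S \<and> V x < T i x)"
  define H where "H = (\<lambda>y. if V x < 1 then y(1 := y 1 + J)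
      else if \<exists>i\<in>S. V x < T i x then gap_move n i0 (V y - (1 + (\<Sum>j\<in>{1..<i0}. y j))) y else y)"
  have H: "sstep n y u J = H y"
    if "(V y < 1) = (V x < 1)" and "\<forall>i\<in>S. (V y < T i y) = (V x < T i x)" for y
  proof -
    have "(\<lambda>i. i \<in> S \<and> V y < T i y) = (\<lambda>i. i \<in> S \<and> V x < T i x)" using that(2) by blast
    then have "(LEAST i. i \<in> S \<and> V y < T i y) = i0" unfolding i0_def by simp
    moreover have "(\<exists>i\<in>S. V y < T i y) = (\<exists>i\<in>S. V x < T i x)" using that(2) by blast
    ultimately show ?thesis
      using that(1) unfolding sstep_def H_def Let_def by (simp add: V_def T_def S_def)
  qed
  have "(H \<longlongrightarrow> H x) (at x)"
  proof -
    have "((\<lambda>y. V y - (1 + (\<Sum>j\<in>{1..<i0}. y j))) \<longlongrightarrow> V x - (1 + (\<Sum>j\<in>{1..<i0}. x j))) (at x)"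
      by (intro tendsto_intros V tendsto_coordinate[OF id])
    from tendsto_gap_move[OF this id] tendsto_fun_upd_add[OF id] show ?thesis
      unfolding H_def by (simp add: id)
  qed
  moreover have "\<forall>\<^sub>F y in at x. H y = sstep n y u J"
    using ev1 ev2 by eventually_elim (simp add: H)
  ultimately have "((\<lambda>y. sstep n y u J) \<longlongrightarrow> H x) (at x)"
    by (rule Lim_transform_eventually)
  then show ?thesis unfolding isCont_def using H[of x] by simp
qed

lemma isCont_sstate:
  assumes "\<And>k. off_boundary n (sstate n y \<omega> k) (fst (snd (\<omega> k)))"
  shows "isCont (\<lambda>y'. sstate n y' \<omega> k) y"
proof (induction k)
  case (Suc k)
  have "isCont (\<lambda>z. sstep n z (fst (snd (\<omega> k))) (snd (snd (\<omega> k)))) (sstate n y \<omega> k)"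
    using assms by (rule isCont_sstep)
  from isCont_tendsto_compose[OF this Suc[unfolded isCont_def]] show ?case
    by (simp add: isCont_def)
qed simp

lemma isCont_stime:
  assumes "\<And>k. off_boundary n (sstate n y \<omega> k) (fst (snd (\<omega> k)))"
    and "\<And>k. srate n (sstate n y \<omega> k) \<noteq> 0"
  shows "isCont (\<lambda>y'. stime n y' \<omega> k) y"
proof (induction k)
  case (Suc k)
  have "isCont (\<lambda>y'. srate n (sstate n y' \<omega> k)) y"
    using isCont_sstate[OF assms(1), of k] unfolding isCont_def by (rule tendsto_srate)
  then have "isCont (\<lambda>y'. fst (\<omega> k) / srate n (sstate n y' \<omega> k)) y"
    using assms(2) by (intro continuous_intros)
  with Suc show ?case by (simp add: continuous_intros)
qed simp

text \<open>If \<open>t\<close> lies strictly between two jump times, it still does after a small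
  perturbation of the initial state, and then \<^const>\<open>sgaps_at\<close> is the state after a fixed
  number of jumps.\<close>

lemma isCont_sgaps_at:
  assumes off: "\<And>k. off_boundary n (sstate n y \<omega> k) (fst (snd (\<omega> k)))"
    and rate: "\<And>k. srate n (sstate n y \<omega> k) \<noteq> 0"
    and no_jump: "\<And>k. t \<noteq> stime n y \<omega> (Suc k)"
    and no_explosion: "\<exists>k. t < stime n y \<omega> (Suc k)"
  shows "isCont (\<lambda>y'. sgaps_at n y' \<omega> t) y"
proof -
  define K where "K = (LEAST k. t < stime n y \<omega> (Suc k))"
  have K: "t < stime n y \<omega> (Suc K)"
    unfolding K_def using no_explosion by (rule LeastI_ex)
  have before_K: "stime n y \<omega> (Suc k) < t" if "k < K" for k
    using not_less_Least[OF that[unfolded K_def]] no_jump[of k] unfolding K_def by auto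
  have stime: "((\<lambda>y'. stime n y' \<omega> k) \<longlongrightarrow> stime n y \<omega> k) (at y)" for k
    using isCont_stime[OF off rate] unfolding isCont_def by blast
  have sgaps_eq: "sgaps_at n y' \<omega> t = sstate n y' \<omega> K"
    if "t < stime n y' \<omega> (Suc K)" and "\<forall>k\<in>{..<K}. stime n y' \<omega> (Suc k) < t" for y'
  proof -
    have "(LEAST k. t < stime n y' \<omega> (Suc k)) = K"
    proof (rule Least_equality)
      fix m assume "t < stime n y' \<omega> (Suc m)"
      with that(2) show "K \<le> m" by (meson lessThan_iff not_less order.asym)
    qed (rule that(1))
    then show ?thesis using that unfolding sgaps_at_def by auto
  qed
  have "\<forall>\<^sub>F y' in at y. t < stime n y' \<omega> (Suc K)"
    using order_tendstoD(1)[OF stime K] .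
  moreover have "\<forall>\<^sub>F y' in at y. \<forall>k\<in>{..<K}. stime n y' \<omega> (Suc k) < t"
    by (intro eventually_ball_finite ballI order_tendstoD(2)[OF stime] before_K) auto
  ultimately have "\<forall>\<^sub>F y' in at y. sstate n y' \<omega> K = sgaps_at n y' \<omega> t"
    by eventually_elim (simp add: sgaps_eq)
  with isCont_sstate[OF off, of K] have "((\<lambda>y'. sgaps_at n y' \<omega> t) \<longlongrightarrow> sstate n y \<omega> K) (at y)"
    unfolding isCont_def by (rule Lim_transform_eventually)
  then show ?thesis unfolding isCont_def using sgaps_eq K before_K by simp
qed


section \<open>Jump times of the gap process\<close>

lemma sstate_cong_prefix: "(\<And>j. j < k \<Longrightarrow> \<omega> j = \<omega>' j) \<Longrightarrow> sstate n y \<omega> k = sstate n y \<omega>' k"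
  by (induction k) auto

lemma stime_cong_prefix: "(\<And>j. j < k \<Longrightarrow> \<omega> j = \<omega>' j) \<Longrightarrow> stime n y \<omega> k = stime n y \<omega>' k"
proof (induction k)
  case (Suc k)
  then show ?case using sstate_cong_prefix[of k \<omega> \<omega>'] by simp
qed simp

lemma sstep_cases:
  fixes x :: "nat \<Rightarrow> real"
  obtains (leader) "sstep n x u J = x(1 := x 1 + J)"
  | (move) i w where "i \<in> {1..n-1}" "0 \<le> w" "w < x i" "sstep n x u J = gap_move n i w x"
  | (none) "sstep n x u J = x"
proof -
  define v where "v = u * srate n x"
  consider "v < 1" | "\<not> v < 1" "\<not> (\<exists>i\<in>{1..n-1}. v < 1 + (\<Sum>j=1..i. x j))"
    | (pair) "\<not> v < 1" "\<exists>i\<in>{1..n-1}. v < 1 + (\<Sum>j=1..i. x j)"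
    by blast
  then show ?thesis
  proof cases
    case pair
    define i where "i = (LEAST i. i \<in> {1..n-1} \<and> v < 1 + (\<Sum>j=1..i. x j))"
    define w where "w = v - (1 + (\<Sum>j\<in>{1..<i}. x j))"
    have "sstep n x u J = gap_move n i w x"
      using pair by (simp add: sstep_def v_def Let_def i_def w_def)
    with least_selected_index[OF pair(2,1)] show ?thesis
      using move unfolding i_def w_def by blast
  qed (use leader none in \<open>simp_all add: sstep_def v_def Let_def\<close>)
qed

lemma sstep_nonneg:
  assumes "\<forall>i. 0 \<le> x i" and "0 \<le> J"
  shows "0 \<le> sstep n x u J i"
  by (cases rule: sstep_cases[of n x u J]) (use assms in \<open>auto simp: gap_move_apply\<close>)

lemma one_le_srate: "\<forall>i. 0 \<le> x i \<Longrightarrow> 1 \<le> srate n x"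
  unfolding srate_def by (simp add: sum_nonneg)

text \<open>A gap move only shifts mass from gap \<open>i\<close> to gap \<open>i + 1\<close> (or loses it at the last
  gap), so the total rate grows only through the leader.\<close>

lemma srate_sstep_le:
  assumes "\<forall>i. 0 \<le> x i" and "0 \<le> J" and "2 \<le> n"
  shows "srate n (sstep n x u J) \<le> srate n x + J"
proof (cases rule: sstep_cases[of n x u J])
  case leader
  have "(\<Sum>j=1..n-1. (x(1 := x 1 + J)) j) = (\<Sum>j=1..n-1. x j + (if j = 1 then J else 0))"
    by (rule sum.cong) auto
  also have "\<dots> = (\<Sum>j=1..n-1. x j) + J" using assms(3) by (simp add: sum.distrib)
  finally show ?thesis using leader by (simp add: srate_def)
next
  case (move i w)
  have "(\<Sum>j=1..n-1. gap_move n i w x j)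
      \<le> (\<Sum>j=1..n-1. x j + (if j = Suc i then w else 0) - (if j = i then w else 0))"
    by (rule sum_mono) (auto simp: gap_move_apply)
  also have "\<dots> = (\<Sum>j=1..n-1. x j) + (\<Sum>j=1..n-1. if j = Suc i then w else 0) - w"
    using move by (simp add: sum_subtractf sum.distrib)
  also have "(\<Sum>j=1..n-1. if j = Suc i then w else 0) \<le> w" using move by simp
  finally show ?thesis using move assms by (simp add: srate_def)
qed (use assms in simp)

definition admissible_noise :: "(nat \<Rightarrow> real \<times> real \<times> real) \<Rightarrow> bool" where
  "admissible_noise \<omega> \<longleftrightarrow> (\<forall>k. 0 \<le> fst (\<omega> k) \<and> 0 \<le> snd (snd (\<omega> k)))"

lemma sstate_nonneg:
  assumes "\<forall>i. 0 \<le> y i" and "admissible_noise \<omega>"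
  shows "\<forall>i. 0 \<le> sstate n y \<omega> k i"
  using assms by (induction k) (auto intro!: sstep_nonneg simp: admissible_noise_def)

lemma one_le_srate_sstate:
  "\<forall>i. 0 \<le> y i \<Longrightarrow> admissible_noise \<omega> \<Longrightarrow> 1 \<le> srate n (sstate n y \<omega> k)"
  by (intro one_le_srate sstate_nonneg)

lemma srate_sstate_le:
  assumes y: "\<forall>i. 0 \<le> y i" and \<omega>: "admissible_noise \<omega>" and n: "2 \<le> n"
  shows "srate n (sstate n y \<omega> k) \<le> srate n y + (\<Sum>j<k. snd (snd (\<omega> j)))"
proof (induction k)
  case (Suc k)
  have "srate n (sstate n y \<omega> (Suc k)) \<le> srate n (sstate n y \<omega> k) + snd (snd (\<omega> k))"
    using \<omega> by (simp add: srate_sstep_le sstate_nonneg[OF y \<omega>] n admissible_noise_def)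
  with Suc show ?case by simp
qed simp

lemma stime_mono:
  assumes y: "\<forall>i. 0 \<le> y i" and \<omega>: "admissible_noise \<omega>" and "a \<le> b"
  shows "stime n y \<omega> a \<le> stime n y \<omega> b"
  using assms(3)
proof (induction b)
  case (Suc b)
  have "0 \<le> fst (\<omega> b) / srate n (sstate n y \<omega> b)"
    using \<omega> one_le_srate_sstate[OF y \<omega>, of n b] unfolding admissible_noise_def by simp
  then show ?case using Suc by (cases "a = Suc b") auto
qed simp

lemma stime_diff_ge:
  assumes y: "\<forall>i. 0 \<le> y i" and \<omega>: "admissible_noise \<omega>" and n: "2 \<le> n" and "a \<le> b"
  shows "(\<Sum>k\<in>{a..<b}. fst (\<omega> k)) / (srate n y + (\<Sum>j<b. snd (snd (\<omega> j))))
    \<le> stime n y \<omega> b - stime n y \<omega> a"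
  using assms(4)
proof (induction b)
  case (Suc b)
  let ?R = "\<lambda>b. srate n y + (\<Sum>j<b. snd (snd (\<omega> j)))"
  show ?case
  proof (cases "a = Suc b")
    case False
    then have ab: "a \<le> b" using Suc.prems by simp
    have E: "0 \<le> fst (\<omega> b)" and "0 \<le> snd (snd (\<omega> b))"
      using \<omega> unfolding admissible_noise_def by auto
    then have R: "?R b \<le> ?R (Suc b)" by simp
    have "1 \<le> ?R b"
      using one_le_srate[OF y] \<omega> unfolding admissible_noise_def by (simp add: sum_nonneg add_increasing2)
    then have "0 < ?R b * ?R (Suc b)" using R by simp
    then have "(\<Sum>k\<in>{a..<b}. fst (\<omega> k)) / ?R (Suc b) \<le> (\<Sum>k\<in>{a..<b}. fst (\<omega> k)) / ?R b"
      using \<omega> R unfolding admissible_noise_def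
      by (intro divide_left_mono sum_nonneg) (auto simp: mult.commute)
    moreover have "fst (\<omega> b) / ?R (Suc b) \<le> fst (\<omega> b) / srate n (sstate n y \<omega> b)"
      using E R srate_sstate_le[OF y \<omega> n, of b] one_le_srate_sstate[OF y \<omega>, of n b]
      by (intro divide_left_mono) auto
    ultimately show ?thesis using Suc.IH[OF ab] ab by (simp add: add_divide_distrib)
  qed simp
qed simp

definition good_block :: "real \<Rightarrow> nat \<Rightarrow> (nat \<Rightarrow> real \<times> real \<times> real) \<Rightarrow> bool" where
  "good_block K m \<omega> \<longleftrightarrow> 2^m / 2 \<le> (\<Sum>k\<in>{2^m..<2*2^m}. fst (\<omega> k))
     \<and> (\<Sum>j<2*2^m. snd (snd (\<omega> j))) \<le> 2 * K * 2^m"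

text \<open>Once \<open>2^m\<close> dominates the initial rate, the rate during a good block is at most
  \<open>(1 + 2 K) 2^m\<close> while the holding variables sum to \<open>2^m / 2\<close>.\<close>

lemma stime_gain_on_good_block:
  assumes y: "\<forall>i. 0 \<le> y i" and \<omega>: "admissible_noise \<omega>" and n: "2 \<le> n" and K: "1 \<le> K"
    and block: "good_block K m \<omega>" and large: "max (real k) (srate n y) \<le> 2^m"
  shows "stime n y \<omega> k + 1 / (2 + 4 * K) \<le> stime n y \<omega> (2 * 2^m)"
proof -
  define N :: real where "N = 2^m"
  let ?E = "\<Sum>k\<in>{2^m..<2*2^m}. fst (\<omega> k)"
  let ?R = "srate n y + (\<Sum>j<2*2^m. snd (snd (\<omega> j)))"
  have "N + 2 * K * N = N * (1 + 2 * K)" by (simp add: algebra_simps)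
  then have "1 / (2 + 4 * K) = (N / 2) / (N + 2 * K * N)"
    using K unfolding N_def by (simp add: divide_simps)
  also have "\<dots> \<le> ?E / ?R"
  proof (rule frac_le)
    show "0 < ?R"
      using one_le_srate[OF y, of n] \<omega> unfolding admissible_noise_def
      by (simp add: sum_nonneg add_pos_nonneg)
    show "?R \<le> N + 2 * K * N" using large block unfolding good_block_def N_def by simp
  qed (use block \<omega> in \<open>auto simp: good_block_def admissible_noise_def N_def intro: sum_nonneg\<close>)
  also have "\<dots> \<le> stime n y \<omega> (2*2^m) - stime n y \<omega> (2^m)"
    by (rule stime_diff_ge[OF y \<omega> n]) simp
  finally have "stime n y \<omega> (2^m) + 1 / (2 + 4 * K) \<le> stime n y \<omega> (2*2^m)" by simp
  moreover have "real k \<le> real (2^m)" using large by simp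
  then have "k \<le> 2^m" by (simp only: of_nat_le_iff)
  then have "stime n y \<omega> k \<le> stime n y \<omega> (2^m)" by (rule stime_mono[OF y \<omega>])
  ultimately show ?thesis by simp
qed

lemma unbounded_by_uniform_increments:
  fixes s :: "nat \<Rightarrow> real"
  assumes "0 < c" and "\<And>k. \<exists>k'. s k + c \<le> s k'"
  shows "\<exists>k. t < s k"
proof -
  have "\<exists>k. s 0 + real L * c \<le> s k" for L
  proof (induction L)
    case (Suc L)
    then obtain k k' where "s 0 + real L * c \<le> s k" "s k + c \<le> s k'"
      using assms(2) by blast
    then show ?case by (intro exI[of _ k']) (simp add: algebra_simps)
  qed auto
  moreover obtain L :: nat where "(t - s 0) / c < L" using reals_Archimedean2 by blast
  then have "t < s 0 + real L * c" using assms(1) by (simp add: field_simps)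
  ultimately show ?thesis by (meson less_le_trans)
qed

lemma stime_unbounded:
  assumes y: "\<forall>i. 0 \<le> y i" and \<omega>: "admissible_noise \<omega>" and n: "2 \<le> n" and K: "1 \<le> K"
    and often: "\<And>M. \<exists>m\<ge>M. good_block K m \<omega>"
  shows "\<exists>k. t < stime n y \<omega> (Suc k)"
proof -
  have "\<exists>k'. stime n y \<omega> k + 1 / (2 + 4 * K) \<le> stime n y \<omega> k'" for k
  proof -
    obtain M :: nat where M: "max (real k) (srate n y) \<le> 2^M"
      using real_arch_pow[of 2 "max (real k) (srate n y)"] by (auto intro: less_imp_le)
    obtain m where "M \<le> m" "good_block K m \<omega>" using often by blast
    have "(2::real)^M \<le> 2^m" using \<open>M \<le> m\<close> by (rule power_increasing) simp
    with M have "max (real k) (srate n y) \<le> 2^m" by (rule order_trans)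
    then show ?thesis using stime_gain_on_good_block[OF y \<omega> n K \<open>good_block K m \<omega>\<close>] by blast
  qed
  then have "\<exists>k. max t 0 < stime n y \<omega> k"
    using K by (intro unbounded_by_uniform_increments[of "1 / (2 + 4 * K)"]) auto
  then obtain k where "max t 0 < stime n y \<omega> k" ..
  then show ?thesis by (cases k) auto
qed


section \<open>The noise space\<close>

lemma measurable_sstep:
  assumes X: "X \<in> borel_measurable M"
    and U[measurable]: "U \<in> borel_measurable M" and J[measurable]: "J \<in> borel_measurable M"
  shows "(\<lambda>\<omega>. sstep n (X \<omega>) (U \<omega>) (J \<omega>)) \<in> borel_measurable M"
proof (rule measurable_coordinatewise_then_product)
  fix j
  have [measurable]: "(\<lambda>\<omega>. X \<omega> i) \<in> borel_measurable M" for i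
    using X by (rule measurable_product_then_coordinatewise)
  define V where "V = (\<lambda>\<omega>. U \<omega> * srate n (X \<omega>))"
  have [measurable]: "V \<in> borel_measurable M" unfolding V_def srate_def by measurable
  define I where "I = (\<lambda>\<omega>. LEAST i. i \<in> {1..n-1} \<and> V \<omega> < 1 + (\<Sum>j=1..i. X \<omega> j))"
  have I: "I \<in> measurable M (count_space UNIV)" unfolding I_def by measurable
  define F where "F = (\<lambda>i \<omega>. gap_move n i (V \<omega> - (1 + (\<Sum>j\<in>{1..<i}. X \<omega> j))) (X \<omega>) j)"
  have "(\<lambda>\<omega>. F i \<omega>) \<in> borel_measurable M" for i
    unfolding F_def gap_move_apply by (cases "j = Suc i"; cases "j = i"; cases "Suc i < n") simp_all
  from measurable_compose_countable[OF this I]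
  have [measurable]: "(\<lambda>\<omega>. F (I \<omega>) \<omega>) \<in> borel_measurable M" .
  have "(\<lambda>\<omega>. ((X \<omega>)(1 := X \<omega> 1 + J \<omega>)) j) \<in> borel_measurable M"
    by (cases "j = 1") simp_all
  moreover have "{\<omega> \<in> space M. V \<omega> < 1} \<in> sets M"
    and "{\<omega> \<in> space M. \<exists>i\<in>{1..n-1}. V \<omega> < 1 + (\<Sum>j=1..i. X \<omega> j)} \<in> sets M"
    by measurable
  ultimately have "(\<lambda>\<omega>. if V \<omega> < 1 then ((X \<omega>)(1 := X \<omega> 1 + J \<omega>)) j
       else if \<exists>i\<in>{1..n-1}. V \<omega> < 1 + (\<Sum>j=1..i. X \<omega> j) then F (I \<omega>) \<omega> else X \<omega> j)
    \<in> borel_measurable M"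
    by (intro measurable_If) simp_all
  moreover have "(\<lambda>\<omega>. sstep n (X \<omega>) (U \<omega>) (J \<omega>) j) =
    (\<lambda>\<omega>. if V \<omega> < 1 then ((X \<omega>)(1 := X \<omega> 1 + J \<omega>)) j
       else if \<exists>i\<in>{1..n-1}. V \<omega> < 1 + (\<Sum>j=1..i. X \<omega> j) then F (I \<omega>) \<omega> else X \<omega> j)"
    unfolding sstep_def Let_def V_def F_def I_def by auto
  ultimately show "(\<lambda>\<omega>. sstep n (X \<omega>) (U \<omega>) (J \<omega>) j) \<in> borel_measurable M"
    by (simp only:)
qed

lemma nn_integral_pair_fst:
  assumes "prob_space B" and f: "f \<in> borel_measurable A"
  shows "(\<integral>\<^sup>+z. f (fst z) \<partial>(A \<Otimes>\<^sub>M B)) = (\<integral>\<^sup>+x. f x \<partial>A)"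
proof -
  interpret B: prob_space B by fact
  have "(\<integral>\<^sup>+z. f (fst z) \<partial>(A \<Otimes>\<^sub>M B)) = (\<integral>\<^sup>+x. \<integral>\<^sup>+y. f (fst (x, y)) \<partial>B \<partial>A)"
    by (rule B.nn_integral_fst[symmetric]) (use f in measurable)
  then show ?thesis by (simp add: B.emeasure_space_1)
qed

lemma nn_integral_pair_snd:
  assumes "prob_space A" "prob_space B" and f: "f \<in> borel_measurable B"
  shows "(\<integral>\<^sup>+z. f (snd z) \<partial>(A \<Otimes>\<^sub>M B)) = (\<integral>\<^sup>+y. f y \<partial>B)"
proof -
  interpret B: prob_space B by fact
  interpret A: prob_space A by fact
  have "(\<integral>\<^sup>+z. f (snd z) \<partial>(A \<Otimes>\<^sub>M B)) = (\<integral>\<^sup>+x. \<integral>\<^sup>+y. f (snd (x, y)) \<partial>B \<partial>A)"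
    by (rule B.nn_integral_fst[symmetric]) (use f in measurable)
  then show ?thesis by (simp add: A.emeasure_space_1)
qed

locale jump_law =
  fixes \<theta> :: "real measure"
  assumes prob_space_jump_law: "prob_space \<theta>"
    and sets_jump_law: "sets \<theta> = sets borel"
    and jump_law_pos: "emeasure \<theta> {0<..} = 1"
    and integrable_jump_law: "integrable \<theta> (\<lambda>x. x)"
    and jump_law_mean: "integral\<^sup>L \<theta> (\<lambda>x. x) = 1"
begin

abbreviation "Exp1 \<equiv> density lborel (\<lambda>x. ennreal (exponential_density 1 x))"
abbreviation "Unif01 \<equiv> uniform_measure lborel {0..1::real}"

lemma space_jump_law: "space \<theta> = UNIV"
  using sets_eq_imp_space_eq[OF sets_jump_law] by simp

lemma emeasure_jump_law_nonpos: "emeasure \<theta> {..0} = 0"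
proof -
  interpret prob_space \<theta> by (rule prob_space_jump_law)
  have "measure \<theta> (space \<theta> - {0<..}) = 1 - measure \<theta> {0<..}"
    using sets_jump_law by (intro prob_compl) simp
  moreover have "space \<theta> - {0<..} = {..0::real}" using space_jump_law by auto
  ultimately show ?thesis using jump_law_pos by (simp add: emeasure_eq_measure)
qed

lemma AE_jump_law_pos: "AE x in \<theta>. 0 < x"
  using emeasure_jump_law_nonpos sets_jump_law
  by (intro AE_I[where N="{..0}"]) (auto simp: space_jump_law)

lemma nn_integral_jump_law: "(\<integral>\<^sup>+x. ennreal x \<partial>\<theta>) = 1"
  using nn_integral_eq_integral[OF integrable_jump_law] AE_jump_law_pos jump_law_mean
  by (simp add: eventually_mono)

lemma prob_space_Exp1: "prob_space Exp1"
  using prob_space_exponential_density[of 1] by simp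

lemma prob_space_Unif01_jump_law: "prob_space (Unif01 \<Otimes>\<^sub>M \<theta>)"
  by (intro prob_space_pair prob_space_jump_law prob_space_uniform_measure) auto

lemma prob_space_step_law: "prob_space (step_law \<theta>)"
  unfolding step_law_def by (rule prob_space_pair[OF prob_space_Exp1 prob_space_Unif01_jump_law])

lemma space_step_law: "space (step_law \<theta>) = UNIV"
  unfolding step_law_def by (simp add: space_pair_measure space_jump_law)

lemma sets_step_law: "sets (step_law \<theta>) = sets (borel \<Otimes>\<^sub>M (borel \<Otimes>\<^sub>M borel))"
  unfolding step_law_def using sets_jump_law by (intro sets_pair_measure_cong) auto

lemma emeasure_step_law_Times:
  assumes "A \<in> sets borel" "B \<in> sets borel" "C \<in> sets borel"
  shows "emeasure (step_law \<theta>) (A \<times> B \<times> C) = emeasure Exp1 A * emeasure Unif01 B * emeasure \<theta> C"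
proof -
  interpret UT: prob_space "Unif01 \<Otimes>\<^sub>M \<theta>" by (rule prob_space_Unif01_jump_law)
  interpret T: prob_space \<theta> by (rule prob_space_jump_law)
  have "emeasure (step_law \<theta>) (A \<times> B \<times> C) = emeasure Exp1 A * emeasure (Unif01 \<Otimes>\<^sub>M \<theta>) (B \<times> C)"
    unfolding step_law_def using assms sets_jump_law by (intro UT.emeasure_pair_measure_Times) auto
  also have "emeasure (Unif01 \<Otimes>\<^sub>M \<theta>) (B \<times> C) = emeasure Unif01 B * emeasure \<theta> C"
    using assms sets_jump_law by (intro T.emeasure_pair_measure_Times) auto
  finally show ?thesis by (simp add: mult.assoc)
qed

lemma emeasure_step_law_holding_eq: "emeasure (step_law \<theta>) {z \<in> space (step_law \<theta>). fst z = c} = 0"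
proof -
  have "{z \<in> space (step_law \<theta>). fst z = c} = {c} \<times> UNIV \<times> UNIV" by (auto simp: space_step_law)
  moreover have "emeasure Exp1 {c} = 0"
    by (subst emeasure_density) (auto intro!: nn_integral_null_set)
  ultimately show ?thesis using emeasure_step_law_Times[of "{c}" UNIV UNIV] by simp
qed

lemma emeasure_step_law_selector_eq: "emeasure (step_law \<theta>) {z \<in> space (step_law \<theta>). fst (snd z) = c} = 0"
proof -
  have "{z \<in> space (step_law \<theta>). fst (snd z) = c} = UNIV \<times> {c} \<times> UNIV" by (auto simp: space_step_law)
  moreover have "emeasure lborel ({0..1} \<inter> {c}) = 0"
    by (rule countable_imp_null_set_lborel[THEN null_setsD1]) auto
  ultimately show ?thesis using emeasure_step_law_Times[of UNIV "{c}" UNIV] by simp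
qed

lemma AE_step_law_nonneg: "AE z in step_law \<theta>. 0 \<le> fst z \<and> 0 \<le> snd (snd z)"
proof -
  have sets: "A \<times> B \<times> C \<in> sets (step_law \<theta>)"
    if "A \<in> sets borel" "B \<in> sets borel" "C \<in> sets borel" for A B C
    using that sets_jump_law unfolding step_law_def by (auto intro!: pair_measureI)
  have "emeasure Exp1 {..<0} = 0"
    by (subst emeasure_density) (auto simp: exponential_density_def indicator_def intro!: nn_integral_zero')
  then have "AE z in step_law \<theta>. 0 \<le> fst z"
    using emeasure_step_law_Times[of "{..<0}" UNIV UNIV] sets[of "{..<0}" UNIV UNIV]
    by (intro AE_I[where N="{..<0} \<times> UNIV \<times> UNIV"]) (auto simp: space_step_law)
  moreover have "AE z in step_law \<theta>. 0 \<le> snd (snd z)"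
    using emeasure_step_law_Times[of UNIV UNIV "{..0}"] sets[of UNIV UNIV "{..0}"] emeasure_jump_law_nonpos
    by (intro AE_I[where N="UNIV \<times> UNIV \<times> {..0}"]) (auto simp: space_step_law)
  ultimately show ?thesis by eventually_elim simp
qed

sublocale SS: sequence_space "step_law \<theta>"
  by (simp add: sequence_space_def product_prob_space_def product_prob_space_axioms_def
      product_sigma_finite_def prob_space_step_law prob_space_imp_sigma_finite)

abbreviation "\<Omega> \<equiv> SFL_space \<theta>"

lemma SFL_space_eq: "\<Omega> = SS.S"
  unfolding SFL_space_def ..

lemma prob_space_SFL_space: "prob_space \<Omega>"
  unfolding SFL_space_eq by (rule SS.prob_space_axioms)

lemma measurable_component[measurable]: "(\<lambda>\<omega>. \<omega> k) \<in> measurable \<Omega> (step_law \<theta>)"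
  unfolding SFL_space_def by (rule measurable_component_singleton) simp

lemma measurable_step_components[measurable]:
  "fst \<in> borel_measurable (step_law \<theta>)"
  "(\<lambda>z. fst (snd z)) \<in> borel_measurable (step_law \<theta>)"
  "(\<lambda>z. snd (snd z)) \<in> borel_measurable (step_law \<theta>)"
  by (simp_all add: measurable_cong_sets[OF sets_step_law refl])

lemma measurable_noise[measurable]:
  "(\<lambda>\<omega>. fst (\<omega> k)) \<in> borel_measurable \<Omega>"
  "(\<lambda>\<omega>. fst (snd (\<omega> k))) \<in> borel_measurable \<Omega>"
  "(\<lambda>\<omega>. snd (snd (\<omega> k))) \<in> borel_measurable \<Omega>"
  by measurable

lemma measurable_sstate: "(\<lambda>\<omega>. sstate n y \<omega> k) \<in> borel_measurable \<Omega>"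
proof (induction k)
  case (Suc k)
  then show ?case unfolding sstate.simps by (rule measurable_sstep) measurable
qed simp

lemma measurable_sstate_coordinate[measurable]: "(\<lambda>\<omega>. sstate n y \<omega> k j) \<in> borel_measurable \<Omega>"
  using measurable_sstate by (rule measurable_product_then_coordinatewise)

lemma measurable_srate_sstate[measurable]: "(\<lambda>\<omega>. srate n (sstate n y \<omega> k)) \<in> borel_measurable \<Omega>"
  unfolding srate_def by measurable

lemma measurable_stime[measurable]: "(\<lambda>\<omega>. stime n y \<omega> k) \<in> borel_measurable \<Omega>"
proof (induction k)
  case (Suc k)
  note [measurable] = Suc
  show ?case unfolding stime.simps by measurable
qed simp

lemma measurable_sgaps_at: "(\<lambda>\<omega>. sgaps_at n y \<omega> t) \<in> borel_measurable \<Omega>"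
proof (rule measurable_coordinatewise_then_product)
  fix j
  have "(\<lambda>\<omega>. LEAST k. t < stime n y \<omega> (Suc k)) \<in> measurable \<Omega> (count_space UNIV)"
    by measurable
  from measurable_compose_countable[OF measurable_sstate_coordinate this]
  have "(\<lambda>\<omega>. sstate n y \<omega> (LEAST k. t < stime n y \<omega> (Suc k)) j) \<in> borel_measurable \<Omega>" .
  moreover have "{\<omega> \<in> space \<Omega>. \<exists>k. t < stime n y \<omega> (Suc k)} \<in> sets \<Omega>"
    by (intro sets.sets_Collect_countable_Ex) measurable
  ultimately have "(\<lambda>\<omega>. if \<exists>k. t < stime n y \<omega> (Suc k)
      then sstate n y \<omega> (LEAST k. t < stime n y \<omega> (Suc k)) j else y j) \<in> borel_measurable \<Omega>"
    by (intro measurable_If) simp_all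
  then show "(\<lambda>\<omega>. sgaps_at n y \<omega> t j) \<in> borel_measurable \<Omega>"
    unfolding sgaps_at_def by (simp add: if_distrib[of "\<lambda>x. x j"])
qed

text \<open>Splitting the noise sequence at \<open>k\<close> (\<^const>\<open>comb_seq\<close>) into two independent
  sequences, \<open>h\<close> sees only the first one and \<open>\<omega> k\<close> is the head of the second.\<close>

lemma emeasure_step_eq_past_zero:
  fixes g :: "real \<times> real \<times> real \<Rightarrow> real" and h :: "(nat \<Rightarrow> real \<times> real \<times> real) \<Rightarrow> real"
  assumes g[measurable]: "g \<in> borel_measurable (step_law \<theta>)"
    and atomless: "\<And>c. emeasure (step_law \<theta>) {z \<in> space (step_law \<theta>). g z = c} = 0"
    and h[measurable]: "h \<in> borel_measurable \<Omega>"
    and past: "\<And>\<omega> \<omega>'. (\<And>j. j < k \<Longrightarrow> \<omega> j = \<omega>' j) \<Longrightarrow> h \<omega> = h \<omega>'"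
  shows "emeasure \<Omega> {\<omega> \<in> space \<Omega>. g (\<omega> k) = h \<omega>} = 0"
proof -
  let ?A = "{\<omega> \<in> space SS.S. g (\<omega> k) = h \<omega>}"
  let ?F = "\<lambda>(\<omega>, \<omega>'). comb_seq k \<omega> \<omega>'"
  let ?B = "{p \<in> space (SS.S \<Otimes>\<^sub>M SS.S). g (snd p 0) = h (fst p)}"
  have [measurable]: "h \<in> borel_measurable SS.S" using h unfolding SFL_space_eq .
  have "(\<lambda>\<omega>. \<omega> k) \<in> measurable SS.S (step_law \<theta>)"
    by (rule measurable_component_singleton) simp
  from measurable_compose[OF this g] have [measurable]: "(\<lambda>\<omega>. g (\<omega> k)) \<in> borel_measurable SS.S" .
  have "emeasure SS.S ?A = emeasure (distr (SS.S \<Otimes>\<^sub>M SS.S) SS.S ?F) ?A"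
    unfolding SS.PiM_comb_seq ..
  also have "\<dots> = emeasure (SS.S \<Otimes>\<^sub>M SS.S) (?F -` ?A \<inter> space (SS.S \<Otimes>\<^sub>M SS.S))"
    by (rule emeasure_distr[OF measurable_comb_seq]) measurable
  also have "?F -` ?A \<inter> space (SS.S \<Otimes>\<^sub>M SS.S) = ?B"
  proof -
    have "g (comb_seq k \<omega> \<omega>' k) = g (\<omega>' 0)" for \<omega> \<omega>' :: "nat \<Rightarrow> real \<times> real \<times> real"
      using comb_seq_add[of k \<omega> \<omega>' 0] by simp
    moreover have "h (comb_seq k \<omega> \<omega>') = h \<omega>" for \<omega> \<omega>'
      by (rule past) (simp add: comb_seq_less)
    moreover have "comb_seq k \<omega> \<omega>' \<in> space SS.S" if "(\<omega>, \<omega>') \<in> space (SS.S \<Otimes>\<^sub>M SS.S)" for \<omega> \<omega>'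
      using measurable_space[OF measurable_comb_seq that] by simp
    ultimately show ?thesis by auto
  qed
  also have "emeasure (SS.S \<Otimes>\<^sub>M SS.S) ?B = (\<integral>\<^sup>+\<omega>. emeasure SS.S (Pair \<omega> -` ?B) \<partial>SS.S)"
    by (rule SS.emeasure_pair_measure_alt) measurable
  also have "\<dots> = (\<integral>\<^sup>+\<omega>. 0 \<partial>SS.S)"
  proof (rule nn_integral_cong)
    fix \<omega> assume \<omega>: "\<omega> \<in> space SS.S"
    have "Pair \<omega> -` ?B = {\<omega>' \<in> space SS.S. \<omega>' 0 \<in> {z \<in> space (step_law \<theta>). g z = h \<omega>}}"
      using \<omega> by (auto simp: space_pair_measure space_PiM)
    moreover have "{z \<in> space (step_law \<theta>). g z = h \<omega>} \<in> sets (step_law \<theta>)" by measurable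
    ultimately show "emeasure SS.S (Pair \<omega> -` ?B) = 0"
      using SS.emeasure_PiM_Collect_single[of 0 "{z \<in> space (step_law \<theta>). g z = h \<omega>}"] atomless
      by simp
  qed
  finally show ?thesis unfolding SFL_space_eq by simp
qed

lemma AE_step_neq_past:
  fixes g :: "real \<times> real \<times> real \<Rightarrow> real" and h :: "(nat \<Rightarrow> real \<times> real \<times> real) \<Rightarrow> real"
  assumes "g \<in> borel_measurable (step_law \<theta>)"
    and "\<And>c. emeasure (step_law \<theta>) {z \<in> space (step_law \<theta>). g z = c} = 0"
    and "h \<in> borel_measurable \<Omega>"
    and "\<And>\<omega> \<omega>'. (\<And>j. j < k \<Longrightarrow> \<omega> j = \<omega>' j) \<Longrightarrow> h \<omega> = h \<omega>'"
  shows "AE \<omega> in \<Omega>. g (\<omega> k) \<noteq> h \<omega>"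
proof -
  have [measurable]: "(\<lambda>\<omega>. g (\<omega> k)) \<in> borel_measurable \<Omega>"
    using measurable_component assms(1) by (rule measurable_compose)
  have "{\<omega> \<in> space \<Omega>. g (\<omega> k) = h \<omega>} \<in> sets \<Omega>" using assms(3) by measurable
  with emeasure_step_eq_past_zero[OF assms] show ?thesis
    by (subst AE_iff_measurable[OF _ refl]) auto
qed

lemma AE_admissible_noise: "AE \<omega> in \<Omega>. admissible_noise \<omega>"
proof -
  have "AE \<omega> in \<Omega>. 0 \<le> fst (\<omega> k) \<and> 0 \<le> snd (snd (\<omega> k))" for k
    unfolding SFL_space_def using AE_step_law_nonneg
    by (rule AE_PiM_component[OF prob_space_step_law UNIV_I, where P="\<lambda>z. 0 \<le> fst z \<and> 0 \<le> snd (snd z)"])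
  then show ?thesis by (simp add: admissible_noise_def AE_all_countable)
qed

lemma AE_off_boundary:
  assumes y: "\<forall>i. 0 \<le> y i"
  shows "AE \<omega> in \<Omega>. \<forall>k. off_boundary n (sstate n y \<omega> k) (fst (snd (\<omega> k)))"
proof -
  have "AE \<omega> in \<Omega>. off_boundary n (sstate n y \<omega> k) (fst (snd (\<omega> k)))" for k
  proof -
    define h where "h i \<omega> = (1 + (\<Sum>j=1..i. sstate n y \<omega> k j)) / srate n (sstate n y \<omega> k)" for i \<omega>
    have "AE \<omega> in \<Omega>. fst (snd (\<omega> k)) \<noteq> h i \<omega>" for i
    proof (rule AE_step_neq_past[OF _ emeasure_step_law_selector_eq])
      fix \<omega> \<omega>' :: "nat \<Rightarrow> real \<times> real \<times> real" assume "\<And>j. j < k \<Longrightarrow> \<omega> j = \<omega>' j"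
      then show "h i \<omega> = h i \<omega>'" unfolding h_def by (simp only: sstate_cong_prefix[of k \<omega> \<omega>'])
    qed (simp_all add: h_def)
    then have "AE \<omega> in \<Omega>. \<forall>i. fst (snd (\<omega> k)) \<noteq> h i \<omega>" by (simp add: AE_all_countable)
    with AE_admissible_noise show ?thesis
    proof eventually_elim
      case (elim \<omega>)
      then have "srate n (sstate n y \<omega> k) \<noteq> 0" using one_le_srate_sstate[OF y elim(1), of n k] by linarith
      with elim show ?case unfolding off_boundary_def h_def by (auto simp: field_simps)
    qed
  qed
  then show ?thesis by (simp add: AE_all_countable)
qed

lemma AE_not_jump_time:
  assumes y: "\<forall>i. 0 \<le> y i"
  shows "AE \<omega> in \<Omega>. \<forall>k. t \<noteq> stime n y \<omega> (Suc k)"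
proof -
  have "AE \<omega> in \<Omega>. t \<noteq> stime n y \<omega> (Suc k)" for k
  proof -
    define h where "h \<omega> = (t - stime n y \<omega> k) * srate n (sstate n y \<omega> k)" for \<omega>
    have "AE \<omega> in \<Omega>. fst (\<omega> k) \<noteq> h \<omega>"
    proof (rule AE_step_neq_past[OF _ emeasure_step_law_holding_eq])
      fix \<omega> \<omega>' :: "nat \<Rightarrow> real \<times> real \<times> real" assume "\<And>j. j < k \<Longrightarrow> \<omega> j = \<omega>' j"
      then show "h \<omega> = h \<omega>'"
        unfolding h_def by (simp only: sstate_cong_prefix[of k \<omega> \<omega>'] stime_cong_prefix[of k \<omega> \<omega>'])
    qed (simp_all add: h_def)
    with AE_admissible_noise show ?thesis
    proof eventually_elim
      case (elim \<omega>)
      then have "srate n (sstate n y \<omega> k) \<noteq> 0" using one_le_srate_sstate[OF y elim(1), of n k] by linarith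
      with elim show ?case unfolding h_def by (auto simp: field_simps)
    qed
  qed
  then show ?thesis by (simp add: AE_all_countable)
qed

end


section \<open>Non-explosion\<close>

lemma exp_half_less_2: "exp (1/2::real) < 2"
proof -
  have "exp (1/2::real) ^ 2 = exp 1" by (simp add: exp_of_nat_mult[symmetric])
  also have "\<dots> \<le> 3" by (rule exp_le)
  finally have "exp (1/2::real) ^ 2 < 2 ^ 2" by simp
  then show ?thesis by (rule power_less_imp_less_base) simp
qed

context jump_law
begin

lemma nn_integral_Exp1_exp_neg: "(\<integral>\<^sup>+x. ennreal (exp (- x)) \<partial>Exp1) = 1/2"
proof -
  have "(\<integral>\<^sup>+x. ennreal (exp (- x)) \<partial>Exp1)
      = (\<integral>\<^sup>+x. ennreal (exponential_density 1 x) * ennreal (exp (- x)) \<partial>lborel)"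
    by (rule nn_integral_density) auto
  also have "\<dots> = (\<integral>\<^sup>+x. ennreal (exponential_density 2 x) * ennreal (1/2) \<partial>lborel)"
  proof (rule nn_integral_cong)
    fix x :: real
    have eq: "exponential_density 1 x * exp (- x) = exponential_density 2 x * (1/2)"
      by (auto simp: exponential_density_def mult_exp_exp)
    have nonneg: "0 \<le> exponential_density 1 x" "0 \<le> exponential_density 2 x"
      by (auto simp: exponential_density_def)
    have "ennreal (exponential_density 1 x) * ennreal (exp (- x))
        = ennreal (exponential_density 1 x * exp (- x))"
      using nonneg by (simp add: ennreal_mult)
    also have "\<dots> = ennreal (exponential_density 2 x) * ennreal (1/2)"
      unfolding eq by (rule ennreal_mult) (use nonneg in simp_all)
    finally show "ennreal (exponential_density 1 x) * ennreal (exp (- x))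
        = ennreal (exponential_density 2 x) * ennreal (1/2)" .
  qed
  also have "\<dots> = (\<integral>\<^sup>+x. ennreal (exponential_density 2 x) \<partial>lborel) * ennreal (1/2)"
    by (rule nn_integral_multc) simp
  also have "(\<integral>\<^sup>+x. ennreal (exponential_density 2 x) \<partial>lborel) = 1"
    using prob_space.emeasure_space_1[OF prob_space_exponential_density[of 2]]
    by (simp add: emeasure_density)
  finally show ?thesis using divide_ennreal[of 1 2] by simp
qed

lemma nn_integral_step_law_holding: "(\<integral>\<^sup>+z. ennreal (exp (- fst z)) \<partial>step_law \<theta>) = 1/2"
  unfolding step_law_def using nn_integral_Exp1_exp_neg
  by (subst nn_integral_pair_fst[OF prob_space_Unif01_jump_law]) auto

lemma nn_integral_step_law_jump: "(\<integral>\<^sup>+z. ennreal (snd (snd z)) \<partial>step_law \<theta>) = 1"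
proof -
  have "(\<lambda>x::real. ennreal x) \<in> borel_measurable borel" by measurable
  then have J: "(\<lambda>x. ennreal x) \<in> borel_measurable \<theta>"
    by (subst measurable_cong_sets[OF sets_jump_law refl])
  have "(\<integral>\<^sup>+z. ennreal (snd (snd z)) \<partial>step_law \<theta>) = (\<integral>\<^sup>+z. ennreal (snd z) \<partial>(Unif01 \<Otimes>\<^sub>M \<theta>))"
    unfolding step_law_def
    by (rule nn_integral_pair_snd[OF prob_space_Exp1 prob_space_Unif01_jump_law])
      (rule measurable_compose[OF measurable_snd J])
  also have "\<dots> = (\<integral>\<^sup>+x. ennreal x \<partial>\<theta>)"
    by (rule nn_integral_pair_snd[OF _ prob_space_jump_law J]) (auto intro: prob_space_uniform_measure)
  finally show ?thesis using nn_integral_jump_law by simp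
qed

lemma nn_integral_component:
  assumes "g \<in> borel_measurable (step_law \<theta>)"
  shows "(\<integral>\<^sup>+\<omega>. g (\<omega> j) \<partial>\<Omega>) = (\<integral>\<^sup>+z. g z \<partial>step_law \<theta>)"
proof -
  have "(\<integral>\<^sup>+z. g z \<partial>step_law \<theta>) = (\<integral>\<^sup>+z. g z \<partial>distr SS.S (step_law \<theta>) (\<lambda>\<omega>. \<omega> j))"
    using SS.PiM_component[of j] by simp
  also have "\<dots> = (\<integral>\<^sup>+\<omega>. g (\<omega> j) \<partial>SS.S)"
    using assms by (intro nn_integral_distr) simp_all
  finally show ?thesis unfolding SFL_space_eq by simp
qed

lemma nn_integral_prod_components:
  assumes J: "finite J" and g[measurable]: "g \<in> borel_measurable (step_law \<theta>)"
  shows "(\<integral>\<^sup>+\<omega>. (\<Prod>k\<in>J. g (\<omega> k)) \<partial>\<Omega>) = (\<integral>\<^sup>+z. g z \<partial>step_law \<theta>) ^ card J"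
proof -
  have r: "(\<lambda>x. restrict x J) \<in> measurable SS.S (PiM J (\<lambda>_. step_law \<theta>))"
    by (rule measurable_restrict_subset) simp
  have gm: "(\<lambda>x. \<Prod>k\<in>J. g (x k)) \<in> borel_measurable (PiM J (\<lambda>_. step_law \<theta>))"
  proof (rule borel_measurable_prod_ennreal)
    fix k assume "k \<in> J"
    show "(\<lambda>x. g (x k)) \<in> borel_measurable (PiM J (\<lambda>_. step_law \<theta>))"
      using measurable_component_singleton[OF \<open>k \<in> J\<close>] g by (rule measurable_compose)
  qed
  have "(\<integral>\<^sup>+\<omega>. (\<Prod>k\<in>J. g (\<omega> k)) \<partial>SS.S) = (\<integral>\<^sup>+\<omega>. (\<Prod>k\<in>J. g (restrict \<omega> J k)) \<partial>SS.S)"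
    by (intro nn_integral_cong prod.cong) auto
  also have "\<dots> = (\<integral>\<^sup>+x. (\<Prod>k\<in>J. g (x k)) \<partial>distr SS.S (PiM J (\<lambda>_. step_law \<theta>)) (\<lambda>x. restrict x J))"
    by (rule nn_integral_distr[OF r, symmetric]) (use gm in simp)
  also have "\<dots> = (\<integral>\<^sup>+x. (\<Prod>k\<in>J. g (x k)) \<partial>PiM J (\<lambda>_. step_law \<theta>))"
    using SS.distr_PiM_restrict_finite[OF J] by simp
  also have "\<dots> = (\<Prod>k\<in>J. \<integral>\<^sup>+z. g z \<partial>step_law \<theta>)"
    by (rule SS.product_nn_integral_prod[OF J]) simp
  finally show ?thesis unfolding SFL_space_eq by simp
qed

text \<open>Chernoff bound, using \<open>E exp (- E\<^sub>k) = 1/2\<close> and independence.\<close>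

lemma emeasure_holding_sum_less:
  assumes J: "finite J"
  shows "emeasure \<Omega> {\<omega> \<in> space \<Omega>. (\<Sum>k\<in>J. fst (\<omega> k)) < c} \<le> ennreal (exp c) * (1/2) ^ card J"
proof -
  let ?A = "{\<omega> \<in> space \<Omega>. (\<Sum>k\<in>J. fst (\<omega> k)) < c}"
  let ?P = "\<lambda>\<omega>. \<Prod>k\<in>J. ennreal (exp (- fst (\<omega> k)))"
  have A: "?A \<in> sets \<Omega>" by measurable
  have "emeasure \<Omega> ?A = (\<integral>\<^sup>+\<omega>. indicator ?A \<omega> \<partial>\<Omega>)" using A by simp
  also have "\<dots> \<le> (\<integral>\<^sup>+\<omega>. ennreal (exp c) * ?P \<omega> \<partial>\<Omega>)"
  proof (rule nn_integral_mono)
    fix \<omega> :: "nat \<Rightarrow> real \<times> real \<times> real"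
    have "?P \<omega> = ennreal (exp (- (\<Sum>k\<in>J. fst (\<omega> k))))"
      using exp_sum[OF J, of "\<lambda>k. - fst (\<omega> k)"] by (simp add: prod_ennreal sum_negf)
    then have "ennreal (exp c) * ?P \<omega> = ennreal (exp (c - (\<Sum>k\<in>J. fst (\<omega> k))))"
      by (simp add: ennreal_mult[symmetric] exp_diff exp_minus field_simps)
    then show "indicator ?A \<omega> \<le> ennreal (exp c) * ?P \<omega>"
      by (cases "\<omega> \<in> ?A") auto
  qed
  also have "\<dots> = ennreal (exp c) * (\<integral>\<^sup>+\<omega>. ?P \<omega> \<partial>\<Omega>)"
    by (rule nn_integral_cmult) measurable
  also have "(\<integral>\<^sup>+\<omega>. ?P \<omega> \<partial>\<Omega>) = (1/2) ^ card J"
    using nn_integral_prod_components[OF J, of "\<lambda>z. ennreal (exp (- fst z))"]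
      nn_integral_step_law_holding by simp
  finally show ?thesis .
qed

lemma measure_holding_block_small:
  "measure \<Omega> {\<omega> \<in> space \<Omega>. (\<Sum>k\<in>{N..<2*N}. fst (\<omega> k)) < real N / 2} \<le> (exp (1/2) / 2) ^ N"
proof -
  interpret prob_space \<Omega> by (rule prob_space_SFL_space)
  have "emeasure \<Omega> {\<omega> \<in> space \<Omega>. (\<Sum>k\<in>{N..<2*N}. fst (\<omega> k)) < real N / 2}
      \<le> ennreal (exp (real N / 2)) * (1/2) ^ N"
    using emeasure_holding_sum_less[of "{N..<2*N}" "real N / 2"] by simp
  also have "\<dots> = ennreal (exp (real N / 2)) * ennreal ((1/2) ^ N)"
    using divide_ennreal[of 1 2] ennreal_power[of "1/2" N] by simp
  also have "\<dots> = ennreal (exp (real N / 2) * (1/2) ^ N)"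
    by (rule ennreal_mult[symmetric]) simp_all
  also have "exp (real N / 2) * (1/2) ^ N = (exp (1/2) / 2) ^ N"
    using exp_of_nat_mult[of N "1/2::real"] by (simp add: power_divide field_simps)
  finally show ?thesis by (simp add: emeasure_eq_measure)
qed

lemma AE_jump_nonneg: "AE \<omega> in \<Omega>. 0 \<le> snd (snd (\<omega> k))"
  using AE_admissible_noise by eventually_elim (simp add: admissible_noise_def)

lemma nn_integral_jump: "(\<integral>\<^sup>+\<omega>. ennreal (snd (snd (\<omega> k))) \<partial>\<Omega>) = 1"
  using nn_integral_component[of "\<lambda>z. ennreal (snd (snd z))"] nn_integral_step_law_jump by simp

lemma integrable_jump: "integrable \<Omega> (\<lambda>\<omega>. snd (snd (\<omega> k)))"
  using AE_jump_nonneg nn_integral_jump by (intro integrableI_nonneg) simp_all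

lemma integral_jump: "(\<integral>\<omega>. snd (snd (\<omega> k)) \<partial>\<Omega>) = 1"
  using AE_jump_nonneg nn_integral_jump by (subst integral_eq_nn_integral) simp_all

lemma measure_jump_sum_large:
  assumes "0 < a"
  shows "measure \<Omega> {\<omega> \<in> space \<Omega>. a \<le> (\<Sum>j<m. snd (snd (\<omega> j)))} \<le> real m / a"
proof -
  have "AE \<omega> in \<Omega>. 0 \<le> (\<Sum>j<m. snd (snd (\<omega> j)))"
    using AE_admissible_noise by eventually_elim (simp add: admissible_noise_def sum_nonneg)
  then have "measure \<Omega> {\<omega> \<in> space \<Omega>. a \<le> (\<Sum>j<m. snd (snd (\<omega> j)))}
      \<le> (\<integral>\<omega>. (\<Sum>j<m. snd (snd (\<omega> j))) \<partial>\<Omega>) / a"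
    using assms by (intro integral_Markov_inequality_measure[OF _ sets.top]) (simp_all add: integrable_jump)
  also have "(\<integral>\<omega>. (\<Sum>j<m. snd (snd (\<omega> j))) \<partial>\<Omega>) = real m"
    by (simp add: integrable_jump integral_jump)
  finally show ?thesis .
qed

lemma pred_good_block[measurable]: "Measurable.pred \<Omega> (good_block K m)"
  unfolding good_block_def by measurable

lemma prob_good_block:
  assumes K: "1 \<le> K"
  shows "1 - 1/K - (exp (1/2) / 2) ^ m \<le> measure \<Omega> {\<omega> \<in> space \<Omega>. good_block K m \<omega>}"
proof -
  interpret prob_space \<Omega> by (rule prob_space_SFL_space)
  define N :: nat where "N = 2^m"
  let ?B1 = "{\<omega> \<in> space \<Omega>. (\<Sum>k\<in>{N..<2*N}. fst (\<omega> k)) < real N / 2}"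
  let ?B2 = "{\<omega> \<in> space \<Omega>. 2 * K * real N \<le> (\<Sum>j<2*N. snd (snd (\<omega> j)))}"
  have cover: "space \<Omega> - {\<omega> \<in> space \<Omega>. good_block K m \<omega>} \<subseteq> ?B1 \<union> ?B2"
    unfolding good_block_def N_def by auto
  have "1 - measure \<Omega> {\<omega> \<in> space \<Omega>. good_block K m \<omega>}
      = measure \<Omega> (space \<Omega> - {\<omega> \<in> space \<Omega>. good_block K m \<omega>})"
    by (rule prob_compl[symmetric]) measurable
  also have "\<dots> \<le> measure \<Omega> (?B1 \<union> ?B2)"
    using cover by (rule finite_measure_mono) measurable
  also have "\<dots> \<le> measure \<Omega> ?B1 + measure \<Omega> ?B2"
    by (rule measure_subadditive) measurable
  also have "measure \<Omega> ?B2 \<le> 1/K"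
    using measure_jump_sum_large[of "2 * K * real N" "2*N"] K by (simp add: N_def)
  also have "measure \<Omega> ?B1 \<le> (exp (1/2) / 2) ^ m"
  proof -
    have "(exp (1/2::real) / 2) ^ N \<le> (exp (1/2) / 2) ^ m"
      using exp_half_less_2 unfolding N_def by (intro power_decreasing) (auto intro: less_imp_le)
    with measure_holding_block_small[of N] show ?thesis by simp
  qed
  finally show ?thesis by simp
qed

lemma prob_good_blocks_often:
  assumes K: "1 \<le> K"
  shows "1 - 1/K \<le> measure \<Omega> {\<omega> \<in> space \<Omega>. \<forall>M. \<exists>m\<ge>M. good_block K m \<omega>}"
proof -
  interpret prob_space \<Omega> by (rule prob_space_SFL_space)
  define U where "U M = {\<omega> \<in> space \<Omega>. \<exists>m\<ge>M. good_block K m \<omega>}" for M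
  have U: "U M \<in> sets \<Omega>" for M unfolding U_def by measurable
  have "1 - 1/K \<le> measure \<Omega> (U M)" for M
  proof (rule field_le_epsilon)
    fix e :: real assume "0 < e"
    obtain p where p: "(exp (1/2) / 2) ^ p < e"
      using real_arch_pow_inv[OF \<open>0 < e\<close>, of "exp (1/2) / 2"] exp_half_less_2 by auto
    have "(exp (1/2::real) / 2) ^ max p M \<le> (exp (1/2) / 2) ^ p"
      using exp_half_less_2 by (intro power_decreasing) auto
    moreover have "{\<omega> \<in> space \<Omega>. good_block K (max p M) \<omega>} \<subseteq> U M"
    proof
      fix \<omega> assume "\<omega> \<in> {\<omega> \<in> space \<Omega>. good_block K (max p M) \<omega>}"
      moreover have "M \<le> max p M" by simp
      ultimately show "\<omega> \<in> U M" unfolding U_def by blast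
    qed
    then have "measure \<Omega> {\<omega> \<in> space \<Omega>. good_block K (max p M) \<omega>} \<le> measure \<Omega> (U M)"
      by (rule finite_measure_mono[OF _ U])
    ultimately show "1 - 1/K \<le> measure \<Omega> (U M) + e"
      using prob_good_block[OF K, of "max p M"] p by simp
  qed
  moreover have "(\<lambda>M. measure \<Omega> (U M)) \<longlonglongrightarrow> measure \<Omega> (\<Inter>M. U M)"
  proof (intro finite_Lim_measure_decseq)
    show "decseq U"
      by (rule decseq_SucI) (auto simp: U_def dest: Suc_leD)
  qed (use U in auto)
  moreover have "(\<Inter>M. U M) = {\<omega> \<in> space \<Omega>. \<forall>M. \<exists>m\<ge>M. good_block K m \<omega>}"
    unfolding U_def by (simp add: set_eq_iff all_conj_distrib)
  ultimately show ?thesis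
    by (intro LIMSEQ_le_const) auto
qed

lemma AE_good_blocks_often: "AE \<omega> in \<Omega>. \<exists>K. \<forall>M. \<exists>m\<ge>M. good_block (real (Suc K)) m \<omega>"
proof -
  interpret prob_space \<Omega> by (rule prob_space_SFL_space)
  let ?often = "\<lambda>K. {\<omega> \<in> space \<Omega>. \<forall>M. \<exists>m\<ge>M. good_block (real (Suc K)) m \<omega>}"
  let ?bad = "{\<omega> \<in> space \<Omega>. \<not> (\<exists>K. \<forall>M. \<exists>m\<ge>M. good_block (real (Suc K)) m \<omega>)}"
  have often: "?often K \<in> sets \<Omega>" for K by measurable
  have bad: "?bad \<in> sets \<Omega>" by measurable
  have "measure \<Omega> ?bad \<le> inverse (real (Suc K))" for K
  proof -
    have "?bad \<subseteq> space \<Omega> - ?often K" by blast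
    then have "measure \<Omega> ?bad \<le> measure \<Omega> (space \<Omega> - ?often K)"
      using often by (intro finite_measure_mono) auto
    also have "\<dots> = 1 - measure \<Omega> (?often K)"
      using often by (rule prob_compl)
    finally show ?thesis
      using prob_good_blocks_often[of "real (Suc K)"] by (simp add: inverse_eq_divide)
  qed
  then have "measure \<Omega> ?bad \<le> 0"
    by (intro LIMSEQ_le_const[OF LIMSEQ_inverse_real_of_nat]) auto
  then have "emeasure \<Omega> ?bad = 0"
    by (simp add: emeasure_eq_measure measure_le_0_iff)
  with bad show ?thesis
    by (subst AE_iff_measurable[OF _ refl]) simp_all
qed

lemma AE_no_explosion:
  assumes y: "\<forall>i. 0 \<le> y i" and n: "2 \<le> n"
  shows "AE \<omega> in \<Omega>. \<exists>k. t < stime n y \<omega> (Suc k)"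
  using AE_admissible_noise AE_good_blocks_often
proof eventually_elim
  case (elim \<omega>)
  then obtain K where "\<forall>M. \<exists>m\<ge>M. good_block (real (Suc K)) m \<omega>" by blast
  then show ?case by (intro stime_unbounded[OF y elim(1) n, of "real (Suc K)"]) auto
qed

end


section \<open>The weak Feller property\<close>

lemma gap_space_nonneg:
  assumes "y \<in> gap_space n"
  shows "\<forall>i. 0 \<le> y i"
proof
  fix i
  show "0 \<le> y i"
    using assms unfolding gap_space_def by (cases "i \<in> {1..n-1}") auto
qed

context jump_law
begin

lemma AE_isCont_sgaps_at:
  assumes y: "\<forall>i. 0 \<le> y i" and n: "2 \<le> n"
  shows "AE \<omega> in \<Omega>. isCont (\<lambda>y'. sgaps_at n y' \<omega> t) y"
  using AE_admissible_noise AE_off_boundary[OF y, of n] AE_not_jump_time[OF y, of t n]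
    AE_no_explosion[OF y n, of t]
proof eventually_elim
  case (elim \<omega>)
  have "srate n (sstate n y \<omega> k) \<noteq> 0" for k
    using one_le_srate_sstate[OF y elim(1), of n k] by simp
  with elim show ?case by (intro isCont_sgaps_at) auto
qed

lemma norm_gap_expect_le:
  assumes f: "f \<in> borel_measurable borel" and B: "\<And>x. norm (f x) \<le> B"
  shows "norm (gap_expect \<theta> n y t f) \<le> B"
proof -
  interpret prob_space \<Omega> by (rule prob_space_SFL_space)
  have "norm (gap_expect \<theta> n y t f) \<le> (\<integral>\<omega>. norm (f (sgaps_at n y \<omega> t)) \<partial>\<Omega>)"
    unfolding gap_expect_def by (rule integral_norm_bound)
  also have "\<dots> \<le> (\<integral>\<omega>. B \<partial>\<Omega>)"
    using measurable_compose[OF measurable_sgaps_at f] B order_trans[OF norm_ge_zero B]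
    by (intro integral_mono integrable_const_bound[where B=B]) auto
  finally show ?thesis by (simp add: prob_space)
qed

lemma continuous_on_gap_expect:
  assumes n: "2 \<le> n" and f_cont: "continuous_on UNIV f" and B: "\<And>x. norm (f x) \<le> B"
  shows "continuous_on (gap_space n) (\<lambda>y. gap_expect \<theta> n y t f)"
proof (rule continuous_on_sequentiallyI)
  fix u :: "nat \<Rightarrow> nat \<Rightarrow> real" and y
  assume "y \<in> gap_space n" and u: "u \<longlonglongrightarrow> y"
  interpret prob_space \<Omega> by (rule prob_space_SFL_space)
  have f: "f \<in> borel_measurable borel" using f_cont by (rule borel_measurable_continuous_onI)
  have "(\<lambda>i. \<integral>\<omega>. f (sgaps_at n (u i) \<omega> t) \<partial>\<Omega>) \<longlonglongrightarrow> (\<integral>\<omega>. f (sgaps_at n y \<omega> t) \<partial>\<Omega>)"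
  proof (rule integral_dominated_convergence[where w="\<lambda>_. B"])
    show "AE \<omega> in \<Omega>. (\<lambda>i. f (sgaps_at n (u i) \<omega> t)) \<longlonglongrightarrow> f (sgaps_at n y \<omega> t)"
      using AE_isCont_sgaps_at[OF gap_space_nonneg[OF \<open>y \<in> gap_space n\<close>] n, of t]
    proof eventually_elim
      case (elim \<omega>)
      have "isCont f (sgaps_at n y \<omega> t)"
        using f_cont by (simp add: continuous_on_eq_continuous_at)
      with isCont_tendsto_compose[OF elim u] show ?case
        by (rule isCont_tendsto_compose[rotated])
    qed
  qed (use measurable_compose[OF measurable_sgaps_at f] B in simp_all)
  then show "(\<lambda>i. gap_expect \<theta> n (u i) t f) \<longlonglongrightarrow> gap_expect \<theta> n y t f"
    unfolding gap_expect_def .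
qed

end

theorem lemma5p1:
  fixes n :: nat and \<theta> :: "real measure"
  assumes "2 \<le> n"
    and "prob_space \<theta>" and "sets \<theta> = sets borel" and "emeasure \<theta> {0<..} = 1"
    and "integrable \<theta> (\<lambda>x. x)" and "integral\<^sup>L \<theta> (\<lambda>x. x) = 1"
  shows "(\<forall>t \<delta> y. 0 \<le> t \<longrightarrow> 0 < \<delta> \<longrightarrow> y \<in> gap_space n \<longrightarrow>
            ((\<lambda>y'. coupled_prob \<theta> n y y' t
                 (\<lambda>s. \<delta> \<le> (\<Sum>i=1..n-1. \<bar>fst s i - snd s i\<bar>)))
              \<longlongrightarrow> 0) (at y within gap_space n))
       \<and> (\<forall>f :: (nat \<Rightarrow> real) \<Rightarrow> real. \<forall>t. continuous_on UNIV f \<and> bounded (range f) \<and> 0 \<le> t \<longrightarrow>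
            continuous_on (gap_space n) (\<lambda>y. gap_expect \<theta> n y t f)
            \<and> bounded ((\<lambda>y. gap_expect \<theta> n y t f) ` gap_space n))"
proof -
  interpret jump_law \<theta> by (intro jump_law.intro assms(2-6))
  show ?thesis
  proof (intro conjI allI impI)
    fix t \<delta> :: real and y :: "nat \<Rightarrow> real" assume "0 < \<delta>"
    then show "((\<lambda>y'. coupled_prob \<theta> n y y' t (\<lambda>s. \<delta> \<le> (\<Sum>i=1..n-1. \<bar>fst s i - snd s i\<bar>)))
        \<longlongrightarrow> 0) (at y within gap_space n)"
      by (rule coupled_prob_tendsto_0[unfolded gap_l1_dist_def])
  next
    fix f :: "(nat \<Rightarrow> real) \<Rightarrow> real" and t :: real
    assume f: "continuous_on UNIV f \<and> bounded (range f) \<and> 0 \<le> t"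
    then obtain B where B: "\<And>x. norm (f x) \<le> B" by (auto simp: bounded_iff)
    show "continuous_on (gap_space n) (\<lambda>y. gap_expect \<theta> n y t f)"
      using f by (intro continuous_on_gap_expect[OF assms(1) _ B]) simp
    have "f \<in> borel_measurable borel" using f by (intro borel_measurable_continuous_onI) simp
    then have "norm (gap_expect \<theta> n y t f) \<le> B" for y by (rule norm_gap_expect_le[OF _ B])
    then show "bounded ((\<lambda>y. gap_expect \<theta> n y t f) ` gap_space n)"
      unfolding bounded_iff by (intro exI[of _ B]) simp
  qed
qed

end
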